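(* (2-cut with spill in MRL.) Let $R_1,R_2\subseteq\mathcal{R}$ be such that $\overline{R_1}$ and $\overline{R_2}$ are disjoint. For all sequents $\Gamma_1,\Gamma_2$ and every formula $A$ of MRL: if $\Gamma_1, R_1{:}A$ and $\Gamma_2, R_2{:}A$ are both derivable in MRL, then $\Gamma_1,\Gamma_2,(R_1\cap R_2){:}A$ is derivable in MRL.
   Context: Fix a nonempty set $\mathcal{R}$ (the set of roles). For $R\subseteq\mathcal{R}$ write $\overline{R}=\mathcal{R}\setminus R$. An ultrafilter $\mathcal{U}$ on $\mathcal{R}$ is a set of subsets of $\mathcal{R}$ such that $\mathcal{R}\in\mathcal{U}$; $R_1\in\mathcal{U}$ and $R_1\subseteq R_2$ imply $R_2\in\mathcal{U}$; $R_1,R_2\in\mathcal{U}$ imply $R_1\cap R_2\in\mathcal{U}$; and for every $R\subseteq\mathcal{R}$, $R\in\mathcal{U}$ or $\overline{R}\in\mathcal{U}$. An endomorphism is any function $f:\mathcal{R}\to\mathcal{R}$, and $f^{-1}(R)$ denotes the preimage of $R$. Fix a first-order language of terms $t$ with variables $x$, and a collection of primitive (atomic) formulas $a$ (which may contain terms). Formulas of MRL: $A ::= a \mid \neg_f(A) \mid A_1\wedge_{\mathcal{U}} A_2 \mid A\supset_{f,\mathcal{U}} B \mid \forall_{\mathcal{U}}(\lambda x.A)$, with $f$ an endomorphism and $\mathcal{U}$ an ultrafilter on $\mathcal{R}$; $x$ is bound in $\forall_{\mathcal{U}}(\lambda x.A)$, and $A[t/x]$ is capture-avoiding substitution. An i-formula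 is a pair $R{:}A$ with $R\subseteq\mathcal{R}$ and $A$ a formula; a sequent is a finite multiset of i-formulas, and comma denotes multiset union. Derivability in MRL is given by the rules (premises $\Rightarrow$ conclusion, $\Gamma,\Gamma_1,\Gamma_2$ arbitrary sequents): (Id) $\Gamma, R_1{:}a,\ldots,R_n{:}a$ is derivable whenever $n\ge1$ and $R_1,\ldots,R_n$ are pairwise disjoint with union $\mathcal{R}$; (Weaken) $\Gamma,R{:}A,R{:}A \Rightarrow \Gamma,R{:}A$; ($\neg$) $\Gamma, f^{-1}(R){:}A \Rightarrow \Gamma, R{:}\neg_f(A)$; ($\wedge$-neg-l) if $R\notin\mathcal{U}$: $\Gamma,R{:}A\Rightarrow\Gamma,R{:}A\wedge_{\mathcal{U}}B$; ($\wedge$-neg-r) if $R\notin\mathcal{U}$: $\Gamma,R{:}B\Rightarrow\Gamma,R{:}A\wedge_{\mathcal{U}}B$; ($\wedge$-pos) if $R\in\mathcal{U}$: $(\Gamma,R{:}A;\ \Gamma,R{:}B)\Rightarrow\Gamma,R{:}A\wedge_{\mathcal{U}}B$; ($\supset$-neg) if $R\notin\mathcal{U}$: $\Gamma,f^{-1}(R){:}A,R{:}B\Rightarrow\Gamma,R{:}A\supset_{f,\mathcal{U}}B$; ($\supset$-pos) if $R\in\mathcal{U}$: $(\Gamma_1,f^{-1}(R){:}A;\ \Gamma_2,R{:}B)\Rightarrow\Gamma_1,\Gamma_2,R{:}A\supset_{f,\mathcal{U}}B$; ($\forall$-neg) if $R\notin\mathcal{U}$ and $t$ is a term: $\Gamma,R{:}A[t/x]\Rightarrow\Gamma,R{:}\forall_{\mathcal{U}}(\lambda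 x.A)$; ($\forall$-pos) if $R\in\mathcal{U}$ and $x$ has no free occurrence in $\Gamma$: $\Gamma,R{:}A\Rightarrow\Gamma,R{:}\forall_{\mathcal{U}}(\lambda x.A)$. A sequent is derivable in MRL if it is the conclusion of a finite derivation tree built from these rules. *)

theory Defs
  imports Main "HOL-Library.Multiset"
begin

text \<open>First-order terms: free (named) variables, bound variables (de Bruijn
indices, only occurring under a quantifier) and function applications.\<close>
datatype ('f, 'v) trm = FVar 'v | BVar nat | Fn 'f "('f, 'v) trm list"

primrec open_trm :: "nat \<Rightarrow> ('f, 'v) trm \<Rightarrow> ('f, 'v) trm \<Rightarrow> ('f, 'v) trm" where
  "open_trm k u (FVar x) = FVar x"
| "open_trm k u (BVar i) = (if i = k then u else BVar i)"
| "open_trm k u (Fn f ts) = Fn f (map (open_trm k u) ts)"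

primrec fv_trm :: "('f, 'v) trm \<Rightarrow> 'v set" where
  "fv_trm (FVar x) = {x}"
| "fv_trm (BVar i) = {}"
| "fv_trm (Fn f ts) = \<Union> (set (map fv_trm ts))"

primrec bvs_trm :: "('f, 'v) trm \<Rightarrow> nat set" where
  "bvs_trm (FVar x) = {}"
| "bvs_trm (BVar i) = {i}"
| "bvs_trm (Fn f ts) = \<Union> (set (map bvs_trm ts))"

definition closed_trm :: "('f, 'v) trm \<Rightarrow> bool" where
  "closed_trm t \<longleftrightarrow> bvs_trm t = {}"

text \<open>Formulas: atoms (predicate applied to terms), \<not>_f, \<and>_U,
 \<supset>_{f,U}, \<forall>_U; the quantifier binds de Bruijn index 0.\<close>
datatype ('r, 'f, 'v, 'p) fm =
    Atom 'p "('f, 'v) trm list"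
  | Neg "'r \<Rightarrow> 'r" "('r, 'f, 'v, 'p) fm"
  | Conj "'r set set" "('r, 'f, 'v, 'p) fm" "('r, 'f, 'v, 'p) fm"
  | Imp "'r \<Rightarrow> 'r" "'r set set" "('r, 'f, 'v, 'p) fm" "('r, 'f, 'v, 'p) fm"
  | Forall "'r set set" "('r, 'f, 'v, 'p) fm"

text \<open>open_fm k u A: replace bound variable k by the term u
 (this realises the capture-avoiding substitution A[u/x]).\<close>
primrec open_fm :: "nat \<Rightarrow> ('f, 'v) trm \<Rightarrow> ('r, 'f, 'v, 'p) fm \<Rightarrow> ('r, 'f, 'v, 'p) fm" where
  "open_fm k u (Atom p ts) = Atom p (map (open_trm k u) ts)"
| "open_fm k u (Neg f A) = Neg f (open_fm k u A)"
| "open_fm k u (Conj U A B) = Conj U (open_fm k u A) (open_fm k u B)"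
| "open_fm k u (Imp f U A B) = Imp f U (open_fm k u A) (open_fm k u B)"
| "open_fm k u (Forall U A) = Forall U (open_fm (Suc k) u A)"

primrec fv_fm :: "('r, 'f, 'v, 'p) fm \<Rightarrow> 'v set" where
  "fv_fm (Atom p ts) = \<Union> (set (map fv_trm ts))"
| "fv_fm (Neg f A) = fv_fm A"
| "fv_fm (Conj U A B) = fv_fm A \<union> fv_fm B"
| "fv_fm (Imp f U A B) = fv_fm A \<union> fv_fm B"
| "fv_fm (Forall U A) = fv_fm A"

primrec lc_at :: "nat \<Rightarrow> ('r, 'f, 'v, 'p) fm \<Rightarrow> bool" where
  "lc_at k (Atom p ts) = (\<forall>t\<in>set ts. \<forall>i\<in>bvs_trm t. i < k)"
| "lc_at k (Neg f A) = lc_at k A"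
| "lc_at k (Conj U A B) = (lc_at k A \<and> lc_at k B)"
| "lc_at k (Imp f U A B) = (lc_at k A \<and> lc_at k B)"
| "lc_at k (Forall U A) = lc_at (Suc k) A"

definition ultrafilter_on_roles :: "'r set set \<Rightarrow> bool" where
  "ultrafilter_on_roles U \<longleftrightarrow>
     UNIV \<in> U
   \<and> (\<forall>R1 R2. R1 \<in> U \<and> R1 \<subseteq> R2 \<longrightarrow> R2 \<in> U)
   \<and> (\<forall>R1 R2. R1 \<in> U \<and> R2 \<in> U \<longrightarrow> R1 \<inter> R2 \<in> U)
   \<and> (\<forall>R. R \<in> U \<or> - R \<in> U)"

primrec ultra_fm :: "('r, 'f, 'v, 'p) fm \<Rightarrow> bool" where
  "ultra_fm (Atom p ts) = True"
| "ultra_fm (Neg f A) = ultra_fm A"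
| "ultra_fm (Conj U A B) = (ultrafilter_on_roles U \<and> ultra_fm A \<and> ultra_fm B)"
| "ultra_fm (Imp f U A B) = (ultrafilter_on_roles U \<and> ultra_fm A \<and> ultra_fm B)"
| "ultra_fm (Forall U A) = (ultrafilter_on_roles U \<and> ultra_fm A)"

text \<open>A formula of MRL: no dangling bound variables, and every decoration is an ultrafilter.\<close>
definition wf_fm :: "('r, 'f, 'v, 'p) fm \<Rightarrow> bool" where
  "wf_fm A \<longleftrightarrow> lc_at 0 A \<and> ultra_fm A"

type_synonym ('r, 'f, 'v, 'p) seq = "('r set \<times> ('r, 'f, 'v, 'p) fm) multiset"

definition wf_seq :: "('r, 'f, 'v, 'p) seq \<Rightarrow> bool" where
  "wf_seq \<Gamma> \<longleftrightarrow> (\<forall>x \<in># \<Gamma>. wf_fm (snd x))"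

definition fv_seq :: "('r, 'f, 'v, 'p) seq \<Rightarrow> 'v set" where
  "fv_seq \<Gamma> = \<Union> ((fv_fm \<circ> snd) ` set_mset \<Gamma>)"

inductive derivable :: "('r, 'f, 'v, 'p) seq \<Rightarrow> bool" where
  Id: "\<lbrakk> Rs \<noteq> [];
         \<forall>i<length Rs. \<forall>j<length Rs. i \<noteq> j \<longrightarrow> Rs ! i \<inter> Rs ! j = {};
         \<Union> (set Rs) = UNIV \<rbrakk>
       \<Longrightarrow> derivable (\<Gamma> + mset (map (\<lambda>R. (R, Atom p ts)) Rs))"
| Weaken: "derivable (\<Gamma> + {#(R, A), (R, A)#}) \<Longrightarrow> derivable (\<Gamma> + {#(R, A)#})"
| NegR: "derivable (\<Gamma> + {#(f -` R, A)#}) \<Longrightarrow> derivable (\<Gamma> + {#(R, Neg f A)#})"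
| ConjNegL: "\<lbrakk> R \<notin> U; derivable (\<Gamma> + {#(R, A)#}) \<rbrakk>
       \<Longrightarrow> derivable (\<Gamma> + {#(R, Conj U A B)#})"
| ConjNegR: "\<lbrakk> R \<notin> U; derivable (\<Gamma> + {#(R, B)#}) \<rbrakk>
       \<Longrightarrow> derivable (\<Gamma> + {#(R, Conj U A B)#})"
| ConjPos: "\<lbrakk> R \<in> U; derivable (\<Gamma> + {#(R, A)#}); derivable (\<Gamma> + {#(R, B)#}) \<rbrakk>
       \<Longrightarrow> derivable (\<Gamma> + {#(R, Conj U A B)#})"
| ImpNeg: "\<lbrakk> R \<notin> U; derivable (\<Gamma> + {#(f -` R, A), (R, B)#}) \<rbrakk>
       \<Longrightarrow> derivable (\<Gamma> + {#(R, Imp f U A B)#})"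
| ImpPos: "\<lbrakk> R \<in> U; derivable (\<Gamma>1 + {#(f -` R, A)#}); derivable (\<Gamma>2 + {#(R, B)#}) \<rbrakk>
       \<Longrightarrow> derivable (\<Gamma>1 + \<Gamma>2 + {#(R, Imp f U A B)#})"
| AllNeg: "\<lbrakk> R \<notin> U; closed_trm t; derivable (\<Gamma> + {#(R, open_fm 0 t A)#}) \<rbrakk>
       \<Longrightarrow> derivable (\<Gamma> + {#(R, Forall U A)#})"
| AllPos: "\<lbrakk> R \<in> U; x \<notin> fv_seq \<Gamma>; x \<notin> fv_fm A;
            derivable (\<Gamma> + {#(R, open_fm 0 (FVar x) A)#}) \<rbrakk>
       \<Longrightarrow> derivable (\<Gamma> + {#(R, Forall U A)#})"

end

theory Submission
  imports Defs
begin

(*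
  Cut is admissible by the multicut argument: induction on the degree of the cut formula A and,
  inside, on the sum of the heights of the two derivations. Because of the contraction rule
  Weaken, each side carries several copies of R1:A, resp. R2:A, which are cut simultaneously.
  If the last rule of one derivation does not act on a copy of the cut formula, the cut is
  permuted into its premises. Otherwise both last rules introduce A, and their premises are
  combined by cuts on the immediate subformulas with role set R1 \<inter> R2: since
  -R1 \<inter> -R2 = {}, every ultrafilter contains R1 or R2, and it contains R1 \<inter> R2 iff it
  contains both, so a positive rule on one side always meets a rule supplying the matching
  premise on the other. Two Id axioms merge into one after replacing the blocks R1 and R2 of
  their partitions by R1 \<inter> R2. Eigenvariables are renamed by height-preserving substitution,
  which needs infinitely many variables.
*)

primrec subst_trm :: "('v \<Rightarrow> ('f, 'v) trm) \<Rightarrow> ('f, 'v) trm \<Rightarrow> ('f, 'v) trm" where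
  "subst_trm \<sigma> (FVar x) = \<sigma> x"
| "subst_trm \<sigma> (BVar i) = BVar i"
| "subst_trm \<sigma> (Fn f ts) = Fn f (map (subst_trm \<sigma>) ts)"

primrec subst_fm :: "('v \<Rightarrow> ('f, 'v) trm) \<Rightarrow> ('r, 'f, 'v, 'p) fm \<Rightarrow> ('r, 'f, 'v, 'p) fm" where
  "subst_fm \<sigma> (Atom p ts) = Atom p (map (subst_trm \<sigma>) ts)"
| "subst_fm \<sigma> (Neg f A) = Neg f (subst_fm \<sigma> A)"
| "subst_fm \<sigma> (Conj U A B) = Conj U (subst_fm \<sigma> A) (subst_fm \<sigma> B)"
| "subst_fm \<sigma> (Imp f U A B) = Imp f U (subst_fm \<sigma> A) (subst_fm \<sigma> B)"
| "subst_fm \<sigma> (Forall U A) = Forall U (subst_fm \<sigma> A)"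

definition subst_seq :: "('v \<Rightarrow> ('f, 'v) trm) \<Rightarrow> ('r, 'f, 'v, 'p) seq \<Rightarrow> ('r, 'f, 'v, 'p) seq" where
  "subst_seq \<sigma> \<Gamma> = image_mset (apsnd (subst_fm \<sigma>)) \<Gamma>"

definition closed_subst :: "('v \<Rightarrow> ('f, 'v) trm) \<Rightarrow> bool" where
  "closed_subst \<sigma> \<longleftrightarrow> (\<forall>x. closed_trm (\<sigma> x))"

lemma subst_seq_simps [simp]:
  "subst_seq \<sigma> {#} = {#}"
  "subst_seq \<sigma> (add_mset (R, A) \<Gamma>) = add_mset (R, subst_fm \<sigma> A) (subst_seq \<sigma> \<Gamma>)"
  "subst_seq \<sigma> (\<Gamma> + \<Delta>) = subst_seq \<sigma> \<Gamma> + subst_seq \<sigma> \<Delta>"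
  by (simp_all add: subst_seq_def)

lemma fv_seq_simps [simp]:
  "fv_seq {#} = {}"
  "fv_seq (add_mset (R, A) \<Gamma>) = fv_fm A \<union> fv_seq \<Gamma>"
  "fv_seq (\<Gamma> + \<Delta>) = fv_seq \<Gamma> \<union> fv_seq \<Delta>"
  by (auto simp: fv_seq_def)

lemma open_trm_no_bvar: "k \<notin> bvs_trm t \<Longrightarrow> open_trm k u t = t"
  by (induction t) (auto simp: map_idI)

lemma bvs_subst_trm: "closed_subst \<sigma> \<Longrightarrow> bvs_trm (subst_trm \<sigma> t) = bvs_trm t"
  by (induction t) (auto simp: closed_subst_def closed_trm_def)

lemma closed_subst_trm: "closed_subst \<sigma> \<Longrightarrow> closed_trm t \<Longrightarrow> closed_trm (subst_trm \<sigma> t)"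
  by (simp add: closed_trm_def bvs_subst_trm)

lemma subst_open_trm:
  "closed_subst \<sigma> \<Longrightarrow> subst_trm \<sigma> (open_trm k u t) = open_trm k (subst_trm \<sigma> u) (subst_trm \<sigma> t)"
  by (induction t) (auto simp: closed_subst_def closed_trm_def open_trm_no_bvar)

lemma subst_open_fm:
  "closed_subst \<sigma> \<Longrightarrow> subst_fm \<sigma> (open_fm k u A) = open_fm k (subst_trm \<sigma> u) (subst_fm \<sigma> A)"
  by (induction A arbitrary: k) (auto simp: subst_open_trm)

lemma subst_trm_cong: "(\<And>x. x \<in> fv_trm t \<Longrightarrow> \<sigma> x = \<tau> x) \<Longrightarrow> subst_trm \<sigma> t = subst_trm \<tau> t"
  by (induction t) auto

lemma subst_fm_cong: "(\<And>x. x \<in> fv_fm A \<Longrightarrow> \<sigma> x = \<tau> x) \<Longrightarrow> subst_fm \<sigma> A = subst_fm \<tau> A"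
  by (induction A) (auto intro: subst_trm_cong)

lemma subst_seq_cong: "(\<And>x. x \<in> fv_seq \<Gamma> \<Longrightarrow> \<sigma> x = \<tau> x) \<Longrightarrow> subst_seq \<sigma> \<Gamma> = subst_seq \<tau> \<Gamma>"
  unfolding subst_seq_def fv_seq_def by (induction \<Gamma>) (auto intro: subst_fm_cong)

lemma subst_trm_FVar [simp]: "subst_trm FVar t = t"
  by (induction t) (auto simp: map_idI)

lemma subst_fm_FVar [simp]: "subst_fm FVar A = A"
  by (induction A) (auto simp: map_idI)

lemma subst_seq_FVar [simp]: "subst_seq FVar \<Gamma> = \<Gamma>"
  by (simp add: subst_seq_def apsnd_def map_prod_def)

lemma subst_fm_fresh: "x \<notin> fv_fm A \<Longrightarrow> subst_fm (FVar(x := t)) A = A"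
  by (metis fun_upd_other subst_fm_FVar subst_fm_cong)

lemma subst_seq_fresh: "x \<notin> fv_seq \<Gamma> \<Longrightarrow> subst_seq (FVar(x := t)) \<Gamma> = \<Gamma>"
  by (metis fun_upd_other subst_seq_FVar subst_seq_cong)

lemma finite_fv_fm: "finite (fv_fm A)"
proof -
  have "finite (fv_trm t)" for t :: "('f, 'v) trm"
    by (induction t) auto
  then show ?thesis
    by (induction A) auto
qed

lemma finite_fv_seq: "finite (fv_seq \<Gamma>)"
  by (auto simp: fv_seq_def finite_fv_fm)

lemma obtain_fresh_var:
  assumes "infinite (UNIV :: 'v set)"
  obtains z :: 'v where "z \<notin> fv_seq \<Gamma>" and "z \<notin> fv_fm A"
  using ex_new_if_finite[OF assms, of "fv_seq \<Gamma> \<union> fv_fm A"] finite_fv_seq finite_fv_fm by blast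

lemma
  shows derivable_Weaken:
    "derivable (add_mset (R, A) (add_mset (R, A) \<Gamma>)) \<Longrightarrow> derivable (add_mset (R, A) \<Gamma>)"
  and derivable_NegR:
    "derivable (add_mset (f -` R, A) \<Gamma>) \<Longrightarrow> derivable (add_mset (R, Neg f A) \<Gamma>)"
  and derivable_ConjNegL:
    "R \<notin> U \<Longrightarrow> derivable (add_mset (R, A) \<Gamma>) \<Longrightarrow> derivable (add_mset (R, Conj U A B) \<Gamma>)"
  and derivable_ConjNegR:
    "R \<notin> U \<Longrightarrow> derivable (add_mset (R, B) \<Gamma>) \<Longrightarrow> derivable (add_mset (R, Conj U A B) \<Gamma>)"
  and derivable_ConjPos:
    "R \<in> U \<Longrightarrow> derivable (add_mset (R, A) \<Gamma>) \<Longrightarrow> derivable (add_mset (R, B) \<Gamma>)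
     \<Longrightarrow> derivable (add_mset (R, Conj U A B) \<Gamma>)"
  and derivable_ImpNeg:
    "R \<notin> U \<Longrightarrow> derivable (add_mset (f -` R, A) (add_mset (R, B) \<Gamma>))
     \<Longrightarrow> derivable (add_mset (R, Imp f U A B) \<Gamma>)"
  and derivable_ImpPos:
    "R \<in> U \<Longrightarrow> derivable (add_mset (f -` R, A) \<Gamma>1) \<Longrightarrow> derivable (add_mset (R, B) \<Gamma>2)
     \<Longrightarrow> derivable (add_mset (R, Imp f U A B) (\<Gamma>1 + \<Gamma>2))"
  and derivable_AllNeg:
    "R \<notin> U \<Longrightarrow> closed_trm t \<Longrightarrow> derivable (add_mset (R, open_fm 0 t A) \<Gamma>)
     \<Longrightarrow> derivable (add_mset (R, Forall U A) \<Gamma>)"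
  and derivable_AllPos:
    "R \<in> U \<Longrightarrow> x \<notin> fv_seq \<Gamma> \<Longrightarrow> x \<notin> fv_fm A \<Longrightarrow> derivable (add_mset (R, open_fm 0 (FVar x) A) \<Gamma>)
     \<Longrightarrow> derivable (add_mset (R, Forall U A) \<Gamma>)"
  using derivable.Weaken[of \<Gamma> R A] derivable.NegR[of \<Gamma> f R A] derivable.ConjNegL[of R U \<Gamma> A B]
    derivable.ConjNegR[of R U \<Gamma> B A] derivable.ConjPos[of R U \<Gamma> A B] derivable.ImpNeg[of R U \<Gamma> f A B]
    derivable.ImpPos[of R U \<Gamma>1 f A \<Gamma>2 B] derivable.AllNeg[of R U t \<Gamma> A] derivable.AllPos[of R U x \<Gamma> A]
  by (simp_all add: add.commute add.left_commute)

lemmas derivable_logical_rules = derivable_NegR derivable_ConjNegL derivable_ConjNegR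
  derivable_ConjPos derivable_ImpNeg derivable_ImpPos derivable_AllNeg derivable_AllPos

inductive derivable_ht :: "nat \<Rightarrow> ('r, 'f, 'v, 'p) seq \<Rightarrow> bool" where
  Id: "\<lbrakk> Rs \<noteq> [];
         \<forall>i<length Rs. \<forall>j<length Rs. i \<noteq> j \<longrightarrow> Rs ! i \<inter> Rs ! j = {};
         \<Union> (set Rs) = UNIV \<rbrakk>
       \<Longrightarrow> derivable_ht n (\<Gamma> + mset (map (\<lambda>R. (R, Atom p ts)) Rs))"
| Weaken: "derivable_ht n (add_mset (R, A) (add_mset (R, A) \<Gamma>))
    \<Longrightarrow> derivable_ht (Suc n) (add_mset (R, A) \<Gamma>)"
| NegR: "derivable_ht n (add_mset (f -` R, A) \<Gamma>) \<Longrightarrow> derivable_ht (Suc n) (add_mset (R, Neg f A) \<Gamma>)"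
| ConjNegL: "\<lbrakk> R \<notin> U; derivable_ht n (add_mset (R, A) \<Gamma>) \<rbrakk>
    \<Longrightarrow> derivable_ht (Suc n) (add_mset (R, Conj U A B) \<Gamma>)"
| ConjNegR: "\<lbrakk> R \<notin> U; derivable_ht n (add_mset (R, B) \<Gamma>) \<rbrakk>
    \<Longrightarrow> derivable_ht (Suc n) (add_mset (R, Conj U A B) \<Gamma>)"
| ConjPos: "\<lbrakk> R \<in> U; derivable_ht n (add_mset (R, A) \<Gamma>); derivable_ht m (add_mset (R, B) \<Gamma>) \<rbrakk>
    \<Longrightarrow> derivable_ht (Suc (max n m)) (add_mset (R, Conj U A B) \<Gamma>)"
| ImpNeg: "\<lbrakk> R \<notin> U; derivable_ht n (add_mset (f -` R, A) (add_mset (R, B) \<Gamma>)) \<rbrakk>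
    \<Longrightarrow> derivable_ht (Suc n) (add_mset (R, Imp f U A B) \<Gamma>)"
| ImpPos: "\<lbrakk> R \<in> U; derivable_ht n (add_mset (f -` R, A) \<Gamma>1); derivable_ht m (add_mset (R, B) \<Gamma>2) \<rbrakk>
    \<Longrightarrow> derivable_ht (Suc (max n m)) (add_mset (R, Imp f U A B) (\<Gamma>1 + \<Gamma>2))"
| AllNeg: "\<lbrakk> R \<notin> U; closed_trm t; derivable_ht n (add_mset (R, open_fm 0 t A) \<Gamma>) \<rbrakk>
    \<Longrightarrow> derivable_ht (Suc n) (add_mset (R, Forall U A) \<Gamma>)"
| AllPos: "\<lbrakk> R \<in> U; x \<notin> fv_seq \<Gamma>; x \<notin> fv_fm A;
            derivable_ht n (add_mset (R, open_fm 0 (FVar x) A) \<Gamma>) \<rbrakk>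
    \<Longrightarrow> derivable_ht (Suc n) (add_mset (R, Forall U A) \<Gamma>)"

lemma derivable_iff_derivable_ht: "derivable \<Gamma> \<longleftrightarrow> (\<exists>n. derivable_ht n \<Gamma>)"
proof
  show "derivable \<Gamma> \<Longrightarrow> \<exists>n. derivable_ht n \<Gamma>"
  proof (induction rule: derivable.induct)
    case (Id Rs \<Gamma> p ts)
    then show ?case by (blast intro: derivable_ht.Id)
  next
    case (ConjPos R U \<Gamma> A B)
    then show ?case by (auto intro: derivable_ht.ConjPos)
  next
    case (ImpPos R U \<Gamma>1 f A \<Gamma>2 B)
    then show ?case by (auto intro: derivable_ht.ImpPos)
  qed (auto intro: derivable_ht.intros)
  show "derivable \<Gamma>" if "\<exists>n. derivable_ht n \<Gamma>"
  proof -
    from that obtain n where "derivable_ht n \<Gamma>" ..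
    then show ?thesis
    proof (induction rule: derivable_ht.induct)
      case (Weaken n R A \<Gamma>)
      show ?case using Weaken.IH by (rule derivable_Weaken)
    next
      case (Id Rs n \<Gamma> p ts)
      then show ?case by (rule derivable.Id)
    qed (auto intro: derivable.Id derivable_logical_rules)
  qed
qed

lemma derivable_ht_subst:
  assumes "derivable_ht n \<Gamma>" and "closed_subst \<sigma>" and "infinite (UNIV :: 'v set)"
  shows "derivable_ht n (subst_seq (\<sigma> :: 'v \<Rightarrow> ('f, 'v) trm) \<Gamma>)"
  using assms
proof (induction arbitrary: \<sigma> rule: derivable_ht.induct)
  case (Id Rs n \<Gamma> p ts)
  then show ?case
    using derivable_ht.Id[of Rs n "subst_seq \<sigma> \<Gamma>" p "map (subst_trm \<sigma>) ts"]
    by (simp add: subst_seq_def multiset.map_comp o_def)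
next
  case (AllPos R U x \<Gamma> A n)
  obtain z where z: "z \<notin> fv_seq (subst_seq \<sigma> \<Gamma>)" "z \<notin> fv_fm (subst_fm \<sigma> A)"
    using obtain_fresh_var[OF AllPos.prems(2)] by blast
  define \<tau> where "\<tau> = \<sigma>(x := FVar z)"
  have "closed_subst \<tau>"
    using AllPos.prems(1) by (simp add: closed_subst_def closed_trm_def \<tau>_def)
  moreover have "subst_seq \<tau> \<Gamma> = subst_seq \<sigma> \<Gamma>" "subst_fm \<tau> A = subst_fm \<sigma> A"
    using AllPos.hyps(2,3) by (auto intro: subst_seq_cong subst_fm_cong simp: \<tau>_def)
  moreover have "subst_trm \<tau> (FVar x) = FVar z"
    by (simp add: \<tau>_def)
  ultimately have "derivable_ht n (add_mset (R, open_fm 0 (FVar z) (subst_fm \<sigma> A)) (subst_seq \<sigma> \<Gamma>))"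
    using AllPos.IH[of \<tau>] AllPos.prems(2) by (simp add: subst_open_fm)
  then show ?case
    using z AllPos.hyps(1) by (simp add: derivable_ht.AllPos)
qed (auto intro: derivable_ht.intros closed_subst_trm simp: subst_open_fm)

lemma derivable_ht_instantiate:
  assumes "derivable_ht n (add_mset (R, open_fm 0 (FVar x) A) \<Gamma>)"
    and "x \<notin> fv_seq \<Gamma>" and "x \<notin> fv_fm A" and "closed_trm t" and "infinite (UNIV :: 'v set)"
  shows "derivable_ht n (add_mset (R, open_fm 0 t A) (\<Gamma> :: ('r, 'f, 'v, 'p) seq))"
proof -
  have "closed_subst (FVar(x := t))"
    using assms(4) by (simp add: closed_subst_def closed_trm_def)
  from derivable_ht_subst[OF assms(1) this assms(5)] show ?thesis
    using assms(2,3) \<open>closed_subst _\<close> by (simp add: subst_seq_fresh subst_open_fm subst_fm_fresh)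
qed

lemma derivable_instantiate:
  "derivable (add_mset (R, open_fm 0 (FVar x) A) \<Gamma>) \<Longrightarrow> x \<notin> fv_seq \<Gamma> \<Longrightarrow> x \<notin> fv_fm A
   \<Longrightarrow> closed_trm t \<Longrightarrow> infinite (UNIV :: 'v set)
   \<Longrightarrow> derivable (add_mset (R, open_fm 0 t A) (\<Gamma> :: ('r, 'f, 'v, 'p) seq))"
  by (meson derivable_iff_derivable_ht derivable_ht_instantiate)

lemma derivable_ht_weaken:
  assumes "derivable_ht n \<Gamma>" and "infinite (UNIV :: 'v set)"
  shows "derivable_ht n (\<Gamma> + (\<Delta> :: ('r, 'f, 'v, 'p) seq))"
  using assms(1)
proof (induction n arbitrary: \<Gamma> rule: less_induct)
  case (less n)
  have IH1: "derivable_ht m (add_mset x (\<Gamma>' + \<Delta>))"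
    if "m < n" "derivable_ht m (add_mset x \<Gamma>')" for m x \<Gamma>'
    using less.IH[OF that] by simp
  have IH2: "derivable_ht m (add_mset x (add_mset y (\<Gamma>' + \<Delta>)))"
    if "m < n" "derivable_ht m (add_mset x (add_mset y \<Gamma>'))" for m x y \<Gamma>'
    using less.IH[OF that] by simp
  from less.prems show ?case
  proof (cases rule: derivable_ht.cases)
    case (Id Rs \<Gamma>' p ts)
    then show ?thesis
      using derivable_ht.Id[of Rs n "\<Gamma>' + \<Delta>" p ts] by (simp add: ac_simps)
  next
    case (ImpPos R U m f A \<Gamma>1 k B \<Gamma>2)
    have "derivable_ht m (add_mset (f -` R, A) (\<Gamma>1 + \<Delta>))"
      by (rule IH1) (use ImpPos in auto)
    with ImpPos show ?thesis
      using derivable_ht.ImpPos[of R U m f A "\<Gamma>1 + \<Delta>" k B \<Gamma>2] by (simp add: ac_simps)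
  next
    case (AllPos R U x \<Gamma>' A m)
    obtain z where z: "z \<notin> fv_seq (\<Gamma>' + \<Delta>)" "z \<notin> fv_fm A"
      using obtain_fresh_var[OF assms(2)] by blast
    have renamed: "derivable_ht m (add_mset (R, open_fm 0 (FVar z) A) \<Gamma>')"
      by (rule derivable_ht_instantiate[where x = x])
        (use AllPos assms(2) in \<open>auto simp: closed_trm_def\<close>)
    have "derivable_ht m (add_mset (R, open_fm 0 (FVar z) A) (\<Gamma>' + \<Delta>))"
      by (rule IH1) (use AllPos renamed in auto)
    with AllPos z show ?thesis by (simp add: derivable_ht.AllPos)
  qed (simp_all add: IH1 IH2 derivable_ht.Weaken derivable_ht.NegR derivable_ht.ConjNegL
      derivable_ht.ConjNegR derivable_ht.ConjPos derivable_ht.ImpNeg derivable_ht.AllNeg)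
qed

lemma derivable_weaken:
  "derivable \<Gamma> \<Longrightarrow> infinite (UNIV :: 'v set) \<Longrightarrow> derivable (\<Gamma> + (\<Delta> :: ('r, 'f, 'v, 'p) seq))"
  by (meson derivable_iff_derivable_ht derivable_ht_weaken)

lemma derivable_contract: "derivable (\<Gamma> + \<Delta>) \<Longrightarrow> set_mset \<Delta> \<subseteq> set_mset \<Gamma> \<Longrightarrow> derivable \<Gamma>"
proof (induction \<Delta>)
  case (add d \<Delta>)
  have "d \<in># \<Gamma>"
    using add.prems(2) by simp
  then obtain \<Gamma>' where \<Gamma>: "\<Gamma> = add_mset d \<Gamma>'"
    by (blast dest: multi_member_split)
  have "derivable (add_mset d (add_mset d (\<Gamma>' + \<Delta>)))"
    using add.prems(1) \<Gamma> by simp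
  then have "derivable (add_mset d (\<Gamma>' + \<Delta>))"
    using derivable_Weaken[of "fst d" "snd d"] by simp
  with add \<Gamma> show ?case by simp
qed simp

definition partitions_roles :: "'r set list \<Rightarrow> bool" where
  "partitions_roles Rs \<longleftrightarrow> sorted_wrt (\<lambda>X Y. X \<inter> Y = {}) Rs \<and> \<Union> (set Rs) = UNIV"

lemma partitions_roles_iff:
  "partitions_roles Rs \<longleftrightarrow>
     Rs \<noteq> [] \<and> (\<forall>i<length Rs. \<forall>j<length Rs. i \<noteq> j \<longrightarrow> Rs ! i \<inter> Rs ! j = {}) \<and> \<Union> (set Rs) = UNIV"
proof -
  have "sorted_wrt (\<lambda>X Y. X \<inter> Y = {}) Rs \<longleftrightarrow>
      (\<forall>i<length Rs. \<forall>j<length Rs. i \<noteq> j \<longrightarrow> Rs ! i \<inter> Rs ! j = {})"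
    unfolding sorted_wrt_iff_nth_less
  proof (intro iffI allI impI)
    fix i j
    assume sorted: "\<forall>i j. i < j \<longrightarrow> j < length Rs \<longrightarrow> Rs ! i \<inter> Rs ! j = {}"
      and "i < length Rs" "j < length Rs" "i \<noteq> j"
    then consider "i < j" | "j < i"
      by linarith
    then show "Rs ! i \<inter> Rs ! j = {}"
      using sorted \<open>i < length Rs\<close> \<open>j < length Rs\<close> by cases (auto simp: Int_commute)
  qed simp
  then show ?thesis
    by (auto simp: partitions_roles_def)
qed

lemma partitions_roles_disjoint:
  assumes "partitions_roles Rs" and "X \<in> set Rs" "Y \<in> set Rs" "X \<noteq> Y"
  shows "X \<inter> Y = {}"
proof -
  have "sorted_wrt (\<lambda>X Y. X \<inter> Y = {}) Rs"
    using assms(1) by (simp add: partitions_roles_def)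
  then show ?thesis
    using assms(2-4) by (induction Rs) (auto simp: Int_commute)
qed

lemma partitions_roles_merge:
  assumes "partitions_roles Rs1" "R1 \<in> set Rs1" "partitions_roles Rs2" "R2 \<in> set Rs2"
    and "- R1 \<inter> - R2 = {}"
  shows "partitions_roles ((R1 \<inter> R2) # removeAll R1 Rs1 @ removeAll R2 Rs2)"
proof -
  have outside1: "S \<subseteq> - R1" if "S \<in> set (removeAll R1 Rs1)" for S
    using that partitions_roles_disjoint[OF assms(1) _ assms(2)] by auto
  have outside2: "S \<subseteq> - R2" if "S \<in> set (removeAll R2 Rs2)" for S
    using that partitions_roles_disjoint[OF assms(3) _ assms(4)] by auto
  have "sorted_wrt (\<lambda>X Y. X \<inter> Y = {}) (removeAll R1 Rs1)"
    "sorted_wrt (\<lambda>X Y. X \<inter> Y = {}) (removeAll R2 Rs2)"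
    using assms(1,3) by (simp_all add: partitions_roles_def removeAll_filter_not_eq sorted_wrt_filter)
  moreover have "X \<inter> Y = {}" if "X \<in> set (removeAll R1 Rs1)" "Y \<in> set (removeAll R2 Rs2)" for X Y
    using outside1[OF that(1)] outside2[OF that(2)] assms(5) by blast
  ultimately have "sorted_wrt (\<lambda>X Y. X \<inter> Y = {}) (removeAll R1 Rs1 @ removeAll R2 Rs2)"
    by (simp add: sorted_wrt_append)
  moreover have "(R1 \<inter> R2) \<inter> S = {}" if "S \<in> set (removeAll R1 Rs1 @ removeAll R2 Rs2)" for S
    using that outside1 outside2 by auto
  moreover have "\<Union> (set ((R1 \<inter> R2) # removeAll R1 Rs1 @ removeAll R2 Rs2)) = UNIV"
  proof -
    have "r \<in> \<Union> (set ((R1 \<inter> R2) # removeAll R1 Rs1 @ removeAll R2 Rs2))" for r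
      using assms(1,3) unfolding partitions_roles_def by (cases "r \<in> R1"; cases "r \<in> R2") auto
    then show ?thesis by blast
  qed
  ultimately show ?thesis
    by (simp add: partitions_roles_def)
qed

lemma derivable_Id:
  "partitions_roles Rs \<Longrightarrow> derivable (\<Gamma> + mset (map (\<lambda>R. (R, Atom p ts)) Rs))"
  by (rule derivable.Id) (simp_all add: partitions_roles_iff)

lemma ultrafilter_Int_iff:
  "ultrafilter_on_roles U \<Longrightarrow> R1 \<inter> R2 \<in> U \<longleftrightarrow> R1 \<in> U \<and> R2 \<in> U"
  unfolding ultrafilter_on_roles_def by blast

lemma ultrafilter_mem_if_Compl_disjoint:
  assumes "ultrafilter_on_roles U" and "- R1 \<inter> - R2 = {}"
  shows "R1 \<in> U \<or> R2 \<in> U"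
proof -
  have "R1 \<in> U \<or> - R1 \<in> U" and "\<And>X Y. X \<in> U \<Longrightarrow> X \<subseteq> Y \<Longrightarrow> Y \<in> U"
    using assms(1) by (auto simp: ultrafilter_on_roles_def)
  moreover have "- R1 \<subseteq> R2"
    using assms(2) by blast
  ultimately show ?thesis
    by blast
qed

primrec degree :: "('r, 'f, 'v, 'p) fm \<Rightarrow> nat" where
  "degree (Atom p ts) = 0"
| "degree (Neg f A) = Suc (degree A)"
| "degree (Conj U A B) = Suc (degree A + degree B)"
| "degree (Imp f U A B) = Suc (degree A + degree B)"
| "degree (Forall U A) = Suc (degree A)"

lemma degree_open_fm [simp]: "degree (open_fm k t A) = degree A"
  by (induction A arbitrary: k) auto

lemma bvs_open_trm: "bvs_trm (open_trm k u t) \<subseteq> (bvs_trm t - {k}) \<union> bvs_trm u"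
  by (induction t) auto

lemma lc_at_open_fm: "lc_at (Suc k) A \<Longrightarrow> closed_trm t \<Longrightarrow> lc_at k (open_fm k t A)"
proof (induction A arbitrary: k)
  case (Atom p ts)
  then show ?case
    using bvs_open_trm[of k t] by (fastforce simp: closed_trm_def)
qed auto

lemma ultra_fm_open_fm [simp]: "ultra_fm (open_fm k t A) = ultra_fm A"
  by (induction A arbitrary: k) auto

lemma wf_fm_open_fm: "wf_fm (Forall U A) \<Longrightarrow> closed_trm t \<Longrightarrow> wf_fm (open_fm 0 t A)"
  by (simp add: wf_fm_def lc_at_open_fm)

text \<open>principal_premises \<Gamma> R A: the sequent \<Gamma>, R:A is the conclusion of a rule with principal
  formula R:A whose premises are derivable. For atoms this is an Id axiom up to contraction;
  in the positive \<forall> case all closed instances are required, which is what renaming the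
  eigenvariable provides.\<close>

primrec principal_premises :: "('r, 'f, 'v, 'p) seq \<Rightarrow> 'r set \<Rightarrow> ('r, 'f, 'v, 'p) fm \<Rightarrow> bool" where
  "principal_premises \<Gamma> R (Atom p ts) \<longleftrightarrow>
     (\<exists>Rs. R \<in> set Rs \<and> partitions_roles Rs \<and> (\<forall>S\<in>set Rs. S \<noteq> R \<longrightarrow> (S, Atom p ts) \<in># \<Gamma>))"
| "principal_premises \<Gamma> R (Neg f A) \<longleftrightarrow> derivable (add_mset (f -` R, A) \<Gamma>)"
| "principal_premises \<Gamma> R (Conj U A B) \<longleftrightarrow>
     (if R \<in> U then derivable (add_mset (R, A) \<Gamma>) \<and> derivable (add_mset (R, B) \<Gamma>)
      else derivable (add_mset (R, A) \<Gamma>) \<or> derivable (add_mset (R, B) \<Gamma>))"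
| "principal_premises \<Gamma> R (Imp f U A B) \<longleftrightarrow>
     (if R \<in> U then \<exists>\<Gamma>1 \<Gamma>2. \<Gamma> = \<Gamma>1 + \<Gamma>2 \<and>
        derivable (add_mset (f -` R, A) \<Gamma>1) \<and> derivable (add_mset (R, B) \<Gamma>2)
      else derivable (add_mset (f -` R, A) (add_mset (R, B) \<Gamma>)))"
| "principal_premises \<Gamma> R (Forall U A) \<longleftrightarrow>
     (if R \<in> U then \<forall>t. closed_trm t \<longrightarrow> derivable (add_mset (R, open_fm 0 t A) \<Gamma>)
      else \<exists>t. closed_trm t \<and> derivable (add_mset (R, open_fm 0 t A) \<Gamma>))"

lemma derivable_if_principal_premises:
  assumes "principal_premises \<Gamma> R A" and inf: "infinite (UNIV :: 'v set)"
  shows "derivable (add_mset (R, A) (\<Gamma> :: ('r, 'f, 'v, 'p) seq))"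
proof (cases A)
  case (Atom p ts)
  then obtain Rs where Rs: "R \<in> set Rs" "partitions_roles Rs"
      "\<forall>S\<in>set Rs. S \<noteq> R \<longrightarrow> (S, Atom p ts) \<in># \<Gamma>"
    using assms(1) by auto
  have "derivable (\<Gamma> + mset (map (\<lambda>R. (R, Atom p ts)) Rs))"
    using Rs(2) by (rule derivable_Id)
  then have "derivable (\<Gamma> + mset (map (\<lambda>R. (R, Atom p ts)) Rs) + {#(R, A)#})"
    using inf by (rule derivable_weaken)
  then have "derivable (add_mset (R, A) \<Gamma> + mset (map (\<lambda>R. (R, Atom p ts)) Rs))"
    by (simp add: ac_simps)
  then show ?thesis
    by (rule derivable_contract) (use Rs Atom in auto)
next
  case (Forall U B)
  show ?thesis
  proof (cases "R \<in> U")
    case True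
    obtain z where "z \<notin> fv_seq \<Gamma>" "z \<notin> fv_fm B"
      using obtain_fresh_var[OF inf] by blast
    moreover have "derivable (add_mset (R, open_fm 0 (FVar z) B) \<Gamma>)"
      using assms(1) Forall True by (simp add: closed_trm_def)
    ultimately show ?thesis
      using Forall True by (simp add: derivable_AllPos)
  next
    case False
    then obtain t where "closed_trm t" "derivable (add_mset (R, open_fm 0 t B) \<Gamma>)"
      using assms(1) Forall by auto
    with Forall False show ?thesis
      by (simp add: derivable_AllNeg)
  qed
next
  case (Neg f B)
  then show ?thesis
    using assms(1) by (simp add: derivable_NegR)
next
  case (Conj U B C)
  then show ?thesis
    using assms(1) derivable_ConjPos[of R U B \<Gamma> C] derivable_ConjNegL[of R U B \<Gamma> C]
      derivable_ConjNegR[of R U C \<Gamma> B]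
    by (auto split: if_splits)
next
  case (Imp f U B C)
  show ?thesis
  proof (cases "R \<in> U")
    case True
    then obtain \<Gamma>1 \<Gamma>2 where "\<Gamma> = \<Gamma>1 + \<Gamma>2" "derivable (add_mset (f -` R, B) \<Gamma>1)"
        "derivable (add_mset (R, C) \<Gamma>2)"
      using assms(1) Imp by auto
    with Imp True show ?thesis
      by (simp add: derivable_ImpPos)
  next
    case False
    with Imp show ?thesis
      using assms(1) by (simp add: derivable_ImpNeg)
  qed
qed

lemma principal_premises_weaken:
  assumes "principal_premises \<Gamma> R A" and inf: "infinite (UNIV :: 'v set)"
  shows "principal_premises (\<Gamma> + \<Delta>) R (A :: ('r, 'f, 'v, 'p) fm)"
proof -
  have weaken1: "derivable (add_mset x (\<Gamma> + \<Delta>))" if "derivable (add_mset x \<Gamma>)" for x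
    using derivable_weaken[OF that inf, of \<Delta>] by simp
  have weaken2: "derivable (add_mset x (add_mset y (\<Gamma> + \<Delta>)))"
    if "derivable (add_mset x (add_mset y \<Gamma>))" for x y
    using derivable_weaken[OF that inf, of \<Delta>] by simp
  show ?thesis
  proof (cases A)
    case (Imp f U B C)
    show ?thesis
    proof (cases "R \<in> U")
      case True
      then obtain \<Gamma>1 \<Gamma>2 where "\<Gamma> = \<Gamma>1 + \<Gamma>2" "derivable (add_mset (f -` R, B) \<Gamma>1)"
          "derivable (add_mset (R, C) \<Gamma>2)"
        using assms(1) Imp by auto
      moreover have "derivable (add_mset (R, C) (\<Gamma>2 + \<Delta>))"
        using derivable_weaken[OF calculation(3) inf, of \<Delta>] by simp
      ultimately show ?thesis
        using Imp True by (simp add: exI[of _ \<Gamma>1] ac_simps)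
    next
      case False
      then show ?thesis
        using assms(1) Imp by (simp add: weaken2)
    qed
  next
    case (Forall U B)
    show ?thesis
    proof (cases "R \<in> U")
      case False
      then obtain t where "closed_trm t" "derivable (add_mset (R, open_fm 0 t B) \<Gamma>)"
        using assms(1) Forall by auto
      with False Forall show ?thesis
        by (auto intro: weaken1)
    qed (use assms(1) Forall in \<open>auto intro: weaken1\<close>)
  qed (use assms(1) in \<open>auto intro: weaken1\<close>)
qed

definition cut_admissible :: "('r, 'f, 'v, 'p) fm \<Rightarrow> bool" where
  "cut_admissible A \<longleftrightarrow>
     (\<forall>R1 R2 \<Gamma>1 \<Gamma>2. - R1 \<inter> - R2 = {} \<longrightarrow>
        derivable (add_mset (R1, A) \<Gamma>1) \<longrightarrow> derivable (add_mset (R2, A) \<Gamma>2) \<longrightarrow>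
        derivable (add_mset (R1 \<inter> R2, A) (\<Gamma>1 + \<Gamma>2)))"

lemma cut_admissibleD:
  "cut_admissible A \<Longrightarrow> - R1 \<inter> - R2 = {} \<Longrightarrow>
   derivable (add_mset (R1, A) \<Gamma>1) \<Longrightarrow> derivable (add_mset (R2, A) \<Gamma>2) \<Longrightarrow>
   derivable (add_mset (R1 \<inter> R2, A) (\<Gamma>1 + \<Gamma>2))"
  unfolding cut_admissible_def by blast

lemma principal_cut_Atom:
  assumes "- R1 \<inter> - R2 = {}"
    and "principal_premises \<Gamma>1 R1 (Atom p ts)" and "principal_premises \<Gamma>2 R2 (Atom p ts)"
  shows "derivable (add_mset (R1 \<inter> R2, Atom p ts) (\<Gamma>1 + \<Gamma>2))"
proof -
  obtain Rs1 where Rs1: "R1 \<in> set Rs1" "partitions_roles Rs1"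
      "\<forall>S\<in>set Rs1. S \<noteq> R1 \<longrightarrow> (S, Atom p ts) \<in># \<Gamma>1"
    using assms(2) by auto
  obtain Rs2 where Rs2: "R2 \<in> set Rs2" "partitions_roles Rs2"
      "\<forall>S\<in>set Rs2. S \<noteq> R2 \<longrightarrow> (S, Atom p ts) \<in># \<Gamma>2"
    using assms(3) by auto
  let ?Rs = "removeAll R1 Rs1 @ removeAll R2 Rs2"
  have "derivable (\<Gamma>1 + \<Gamma>2 + mset (map (\<lambda>R. (R, Atom p ts)) ((R1 \<inter> R2) # ?Rs)))"
    using partitions_roles_merge[OF Rs1(2,1) Rs2(2,1) assms(1)] by (rule derivable_Id)
  then have "derivable (add_mset (R1 \<inter> R2, Atom p ts) (\<Gamma>1 + \<Gamma>2) + mset (map (\<lambda>R. (R, Atom p ts)) ?Rs))"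
    by simp
  then show ?thesis
    by (rule derivable_contract) (use Rs1(3) Rs2(3) in auto)
qed

lemma principal_cut_Neg:
  assumes "cut_admissible A" and "- R1 \<inter> - R2 = {}"
    and "principal_premises \<Gamma>1 R1 (Neg f A)" and "principal_premises \<Gamma>2 R2 (Neg f A)"
  shows "derivable (add_mset (R1 \<inter> R2, Neg f A) (\<Gamma>1 + \<Gamma>2))"
proof -
  have "- (f -` R1) \<inter> - (f -` R2) = {}"
    using assms(2) by auto
  then have "derivable (add_mset (f -` R1 \<inter> f -` R2, A) (\<Gamma>1 + \<Gamma>2))"
    using assms(3,4) by (simp add: cut_admissibleD[OF assms(1)])
  then show ?thesis
    by (simp add: derivable_NegR vimage_Int)
qed

lemma principal_cut_Conj_mixed:
  assumes "ultrafilter_on_roles U" and "cut_admissible A" "cut_admissible B"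
    and "- R1 \<inter> - R2 = {}" "R1 \<in> U" "R2 \<notin> U"
    and "principal_premises \<Gamma>1 R1 (Conj U A B)" and "principal_premises \<Gamma>2 R2 (Conj U A B)"
  shows "derivable (add_mset (R1 \<inter> R2, Conj U A B) (\<Gamma>1 + \<Gamma>2))"
proof -
  have neg: "R1 \<inter> R2 \<notin> U"
    using assms(6) ultrafilter_Int_iff[OF assms(1)] by blast
  have "derivable (add_mset (R1, A) \<Gamma>1)" "derivable (add_mset (R1, B) \<Gamma>1)"
    using assms(5,7) by simp_all
  moreover have "derivable (add_mset (R2, A) \<Gamma>2) \<or> derivable (add_mset (R2, B) \<Gamma>2)"
    using assms(6,8) by simp
  ultimately show ?thesis
    using cut_admissibleD[OF assms(2,4)] cut_admissibleD[OF assms(3,4)]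
      derivable_ConjNegL[OF neg] derivable_ConjNegR[OF neg] by blast
qed

lemma principal_cut_Conj:
  assumes "ultrafilter_on_roles U" and "cut_admissible A" "cut_admissible B"
    and "- R1 \<inter> - R2 = {}"
    and "principal_premises \<Gamma>1 R1 (Conj U A B)" and "principal_premises \<Gamma>2 R2 (Conj U A B)"
  shows "derivable (add_mset (R1 \<inter> R2, Conj U A B) (\<Gamma>1 + \<Gamma>2))"
proof -
  consider "R1 \<in> U" "R2 \<in> U" | "R1 \<in> U" "R2 \<notin> U" | "R1 \<notin> U" "R2 \<in> U"
    using ultrafilter_mem_if_Compl_disjoint[OF assms(1,4)] by blast
  then show ?thesis
  proof cases
    case 1
    then have "R1 \<inter> R2 \<in> U"
      using ultrafilter_Int_iff[OF assms(1)] by blast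
    then show ?thesis
      using 1 assms(5,6) cut_admissibleD[OF assms(2,4)] cut_admissibleD[OF assms(3,4)]
      by (simp add: derivable_ConjPos)
  next
    case 2
    then show ?thesis
      using assms by (rule_tac principal_cut_Conj_mixed) auto
  next
    case 3
    then have "derivable (add_mset (R2 \<inter> R1, Conj U A B) (\<Gamma>2 + \<Gamma>1))"
      using assms by (rule_tac principal_cut_Conj_mixed) auto
    then show ?thesis
      by (simp add: Int_commute add.commute)
  qed
qed

lemma principal_cut_Imp_mixed:
  assumes "ultrafilter_on_roles U" and "cut_admissible A" "cut_admissible B"
    and "- R1 \<inter> - R2 = {}" "R1 \<in> U" "R2 \<notin> U"
    and "principal_premises \<Gamma>1 R1 (Imp f U A B)" and "principal_premises \<Gamma>2 R2 (Imp f U A B)"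
  shows "derivable (add_mset (R1 \<inter> R2, Imp f U A B) (\<Gamma>1 + \<Gamma>2))"
proof -
  obtain \<Gamma>1a \<Gamma>1b where \<Gamma>1: "\<Gamma>1 = \<Gamma>1a + \<Gamma>1b"
    and A1: "derivable (add_mset (f -` R1, A) \<Gamma>1a)" and B1: "derivable (add_mset (R1, B) \<Gamma>1b)"
    using assms(5,7) by auto
  have AB2: "derivable (add_mset (f -` R2, A) (add_mset (R2, B) \<Gamma>2))"
    using assms(6,8) by simp
  have "- (f -` R1) \<inter> - (f -` R2) = {}"
    using assms(4) by auto
  from cut_admissibleD[OF assms(2) this A1 AB2]
  have "derivable (add_mset (R2, B) (add_mset (f -` (R1 \<inter> R2), A) (\<Gamma>1a + \<Gamma>2)))"
    by (simp add: vimage_Int add_mset_commute)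
  from cut_admissibleD[OF assms(3,4) B1 this]
  have "derivable (add_mset (f -` (R1 \<inter> R2), A) (add_mset (R1 \<inter> R2, B) (\<Gamma>1 + \<Gamma>2)))"
    by (simp add: \<Gamma>1 ac_simps add_mset_commute)
  moreover have "R1 \<inter> R2 \<notin> U"
    using assms(6) ultrafilter_Int_iff[OF assms(1)] by blast
  ultimately show ?thesis
    by (simp add: derivable_ImpNeg)
qed

lemma principal_cut_Imp:
  assumes "ultrafilter_on_roles U" and "cut_admissible A" "cut_admissible B"
    and "- R1 \<inter> - R2 = {}"
    and "principal_premises \<Gamma>1 R1 (Imp f U A B)" and "principal_premises \<Gamma>2 R2 (Imp f U A B)"
  shows "derivable (add_mset (R1 \<inter> R2, Imp f U A B) (\<Gamma>1 + \<Gamma>2))"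
proof -
  consider "R1 \<in> U" "R2 \<in> U" | "R1 \<in> U" "R2 \<notin> U" | "R1 \<notin> U" "R2 \<in> U"
    using ultrafilter_mem_if_Compl_disjoint[OF assms(1,4)] by blast
  then show ?thesis
  proof cases
    case 1
    obtain \<Gamma>1a \<Gamma>1b where \<Gamma>1: "\<Gamma>1 = \<Gamma>1a + \<Gamma>1b"
      and "derivable (add_mset (f -` R1, A) \<Gamma>1a)" "derivable (add_mset (R1, B) \<Gamma>1b)"
      using 1 assms(5) by auto
    moreover obtain \<Gamma>2a \<Gamma>2b where \<Gamma>2: "\<Gamma>2 = \<Gamma>2a + \<Gamma>2b"
      and "derivable (add_mset (f -` R2, A) \<Gamma>2a)" "derivable (add_mset (R2, B) \<Gamma>2b)"
      using 1 assms(6) by auto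
    moreover have "- (f -` R1) \<inter> - (f -` R2) = {}"
      using assms(4) by auto
    ultimately have "derivable (add_mset (f -` (R1 \<inter> R2), A) (\<Gamma>1a + \<Gamma>2a))"
      and "derivable (add_mset (R1 \<inter> R2, B) (\<Gamma>1b + \<Gamma>2b))"
      using cut_admissibleD[OF assms(2)] cut_admissibleD[OF assms(3,4)] by (auto simp: vimage_Int)
    moreover have "R1 \<inter> R2 \<in> U"
      using 1 ultrafilter_Int_iff[OF assms(1)] by blast
    ultimately show ?thesis
      using derivable_ImpPos by (fastforce simp: \<Gamma>1 \<Gamma>2 ac_simps)
  next
    case 2
    then show ?thesis
      using assms by (rule_tac principal_cut_Imp_mixed) auto
  next
    case 3
    then have "derivable (add_mset (R2 \<inter> R1, Imp f U A B) (\<Gamma>2 + \<Gamma>1))"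
      using assms by (rule_tac principal_cut_Imp_mixed) auto
    then show ?thesis
      by (simp add: Int_commute add.commute)
  qed
qed

lemma principal_cut_Forall_mixed:
  assumes "ultrafilter_on_roles U" and "\<And>t. closed_trm t \<Longrightarrow> cut_admissible (open_fm 0 t A)"
    and "- R1 \<inter> - R2 = {}" "R1 \<in> U" "R2 \<notin> U"
    and "principal_premises \<Gamma>1 R1 (Forall U A)" and "principal_premises \<Gamma>2 R2 (Forall U A)"
  shows "derivable (add_mset (R1 \<inter> R2, Forall U A) (\<Gamma>1 + \<Gamma>2))"
proof -
  obtain t where t: "closed_trm t" and "derivable (add_mset (R2, open_fm 0 t A) \<Gamma>2)"
    using assms(5,7) by auto
  moreover have "derivable (add_mset (R1, open_fm 0 t A) \<Gamma>1)"
    using assms(4,6) t by simp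
  ultimately have "derivable (add_mset (R1 \<inter> R2, open_fm 0 t A) (\<Gamma>1 + \<Gamma>2))"
    using cut_admissibleD[OF assms(2)[OF t] assms(3)] by blast
  moreover have "R1 \<inter> R2 \<notin> U"
    using assms(5) ultrafilter_Int_iff[OF assms(1)] by blast
  ultimately show ?thesis
    using t by (simp add: derivable_AllNeg)
qed

lemma principal_cut_Forall:
  assumes "infinite (UNIV :: 'v set)"
    and "ultrafilter_on_roles U" and "\<And>t. closed_trm t \<Longrightarrow> cut_admissible (open_fm 0 t A)"
    and "- R1 \<inter> - R2 = {}"
    and "principal_premises \<Gamma>1 R1 (Forall U A)" and "principal_premises \<Gamma>2 R2 (Forall U A)"
  shows "derivable (add_mset (R1 \<inter> R2, Forall U A) (\<Gamma>1 + (\<Gamma>2 :: ('r, 'f, 'v, 'p) seq)))"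
proof -
  consider "R1 \<in> U" "R2 \<in> U" | "R1 \<in> U" "R2 \<notin> U" | "R1 \<notin> U" "R2 \<in> U"
    using ultrafilter_mem_if_Compl_disjoint[OF assms(2,4)] by blast
  then show ?thesis
  proof cases
    case 1
    obtain z where z: "z \<notin> fv_seq (\<Gamma>1 + \<Gamma>2)" "z \<notin> fv_fm A"
      using obtain_fresh_var[OF assms(1)] by blast
    have closed: "closed_trm (FVar z)"
      by (simp add: closed_trm_def)
    then have "derivable (add_mset (R1, open_fm 0 (FVar z) A) \<Gamma>1)"
      and "derivable (add_mset (R2, open_fm 0 (FVar z) A) \<Gamma>2)"
      using 1 assms(5,6) by auto
    then have "derivable (add_mset (R1 \<inter> R2, open_fm 0 (FVar z) A) (\<Gamma>1 + \<Gamma>2))"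
      by (rule cut_admissibleD[OF assms(3)[OF closed] assms(4)])
    moreover have "R1 \<inter> R2 \<in> U"
      using 1 ultrafilter_Int_iff[OF assms(2)] by blast
    ultimately show ?thesis
      using z by (simp add: derivable_AllPos)
  next
    case 2
    then show ?thesis
      using assms(2-6) by (rule_tac principal_cut_Forall_mixed) auto
  next
    case 3
    then have "derivable (add_mset (R2 \<inter> R1, Forall U A) (\<Gamma>2 + \<Gamma>1))"
      using assms(2-6) by (rule_tac principal_cut_Forall_mixed) auto
    then show ?thesis
      by (simp add: Int_commute add.commute)
  qed
qed

lemma principal_cut:
  assumes "infinite (UNIV :: 'v set)" and "wf_fm (A :: ('r, 'f, 'v, 'p) fm)"
    and "\<And>B :: ('r, 'f, 'v, 'p) fm. degree B < degree A \<Longrightarrow> wf_fm B \<Longrightarrow> cut_admissible B"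
    and "- R1 \<inter> - R2 = {}"
    and "principal_premises \<Gamma>1 R1 A" and "principal_premises \<Gamma>2 R2 A"
  shows "derivable (add_mset (R1 \<inter> R2, A) (\<Gamma>1 + \<Gamma>2))"
proof (cases A)
  case (Atom p ts)
  with assms(4-6) show ?thesis
    by (simp add: principal_cut_Atom)
next
  case (Neg f B)
  have "cut_admissible B"
    using assms(2) Neg by (intro assms(3)) (auto simp: wf_fm_def)
  with assms(4-6) show ?thesis
    unfolding Neg by (intro principal_cut_Neg)
next
  case (Conj U B C)
  show ?thesis
    unfolding Conj by (rule principal_cut_Conj) (use assms Conj in \<open>auto simp: wf_fm_def\<close>)
next
  case (Imp f U B C)
  show ?thesis
    unfolding Imp by (rule principal_cut_Imp) (use assms Imp in \<open>auto simp: wf_fm_def\<close>)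
next
  case (Forall U B)
  have "cut_admissible (open_fm 0 t B)" if "closed_trm t" for t
  proof (rule assms(3))
    show "wf_fm (open_fm 0 t B)"
      using assms(2) Forall that by (simp add: wf_fm_open_fm)
  qed (simp add: Forall)
  then show ?thesis
    unfolding Forall by (rule_tac principal_cut_Forall) (use assms Forall in \<open>auto simp: wf_fm_def\<close>)
qed

lemma union_eq_union_cases:
  fixes A B C D :: "'a multiset"
  assumes "A + B = C + D"
  obtains A1 A2 B1 B2 where "A = A1 + A2" "B = B1 + B2" "C = A1 + B1" "D = A2 + B2"
proof -
  define A2 where "A2 = A \<inter># D"
  define B2 where "B2 = D - A2"
  have count: "count A x + count B x = count C x + count D x" for x
    using assms by (metis count_union)
  have "count A x = count ((A - A2) + A2) x" "count B x = count ((B - B2) + B2) x"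
    "count C x = count ((A - A2) + (B - B2)) x" "count D x = count (A2 + B2) x" for x
    using count[of x] by (auto simp: A2_def B2_def min_def)
  then have "A = (A - A2) + A2" "B = (B - B2) + B2" "C = (A - A2) + (B - B2)" "D = A2 + B2"
    by (metis multiset_eqI)+
  then show ?thesis
    using that by blast
qed

lemma union_eq_add_mset_mem: "G + M = add_mset d \<Gamma> \<Longrightarrow> d \<in># M \<Longrightarrow> \<Gamma> = G + (M - {#d#})"
  by (metis add_mset_remove_trivial insert_DiffM union_mset_add_mset_right)

lemma union_eq_add_mset_not_mem:
  assumes "G + M = add_mset d \<Gamma>" and "d \<notin># M"
  obtains G' where "G = add_mset d G'" and "\<Gamma> = G' + M"
proof -
  have "d \<in># G"
    using assms by (metis add_mset_add_single union_iff union_single_eq_member)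
  then obtain G' where "G = add_mset d G'"
    by (blast dest: multi_member_split)
  with assms(1) that show ?thesis
    by simp
qed

text \<open>Analysis of the last rule of a derivation of G + M, where M consists of copies of the cut
  formula R:A, Th is what replaces the cut formula, and cut_below is the hypothesis that cuts
  on derivations of smaller height can be performed. Either the cut permutes upward, or the last
  rule acted on a copy of R:A and its premises, with the cut performed in them, witness
  principal_premises.\<close>

context
  fixes R :: "'r set" and A :: "('r, 'f, 'v, 'p) fm" and Th :: "('r, 'f, 'v, 'p) seq"
    and n :: nat and G M :: "('r, 'f, 'v, 'p) seq"
  assumes infinite_vars: "infinite (UNIV :: 'v set)"
    and cut_below: "\<And>k G' M'. k < n \<Longrightarrow> derivable_ht k (G' + M') \<Longrightarrow> set_mset M' \<subseteq> {(R, A)}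
      \<Longrightarrow> derivable (G' + Th)"
    and copies: "set_mset M \<subseteq> {(R, A)}"
begin

lemma principal_outcome:
  "principal_premises (G + Th) R A \<Longrightarrow> principal_premises (G + Th + Th) R A"
  using principal_premises_weaken infinite_vars by blast

lemma cut_analysis_Id:
  assumes "G + M = \<Gamma> + mset (map (\<lambda>S. (S, Atom p ts)) Rs)" and "partitions_roles Rs"
  shows "derivable (G + Th) \<or> principal_premises (G + Th + Th) R A"
proof (cases "A = Atom p ts \<and> R \<in> set Rs")
  case True
  have "(S, Atom p ts) \<in># G" if "S \<in> set Rs" "S \<noteq> R" for S
  proof -
    have "(S, Atom p ts) \<in># G + M"
      using that(1) by (simp add: assms(1))
    moreover have "(S, Atom p ts) \<notin># M"
      using copies that(2) by auto
    ultimately show ?thesis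
      by simp
  qed
  then have "principal_premises (G + Th) R A"
    using True assms(2) by auto
  then show ?thesis
    using principal_outcome by blast
next
  case False
  let ?X = "mset (map (\<lambda>S. (S, Atom p ts)) Rs)"
  have "?X \<subseteq># G"
  proof (rule mset_subset_eqI)
    fix x
    show "count ?X x \<le> count G x"
    proof (cases "x \<in># ?X")
      case True
      then have "count M x = 0"
        using False copies by (auto simp: count_eq_zero_iff)
      then show ?thesis
        using arg_cong[OF assms(1), of "\<lambda>N. count N x"] by simp
    next
      case False
      then have "count ?X x = 0"
        by (rule count_eq_zero_iff[THEN iffD2])
      then show ?thesis
        by simp
    qed
  qed
  then obtain G' where "G = G' + ?X"
    by (metis subset_mset.add_diff_inverse add.commute)
  moreover have "derivable (G' + Th + ?X)"
    using assms(2) by (rule derivable_Id)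
  ultimately show ?thesis
    by (simp add: ac_simps)
qed

lemma cut_analysis_Weaken:
  assumes "G + M = add_mset (S, B) \<Gamma>" and "derivable_ht k (add_mset (S, B) (add_mset (S, B) \<Gamma>))"
    and "k < n"
  shows "derivable (G + Th)"
proof (cases "(S, B) \<in># M")
  case True
  let ?M = "add_mset (S, B) (add_mset (S, B) (M - {#(S, B)#}))"
  have "derivable_ht k (G + ?M)"
    using assms(2) union_eq_add_mset_mem[OF assms(1) True] by simp
  moreover have "set_mset ?M \<subseteq> {(R, A)}"
    using True copies by (auto dest: in_diffD)
  ultimately show ?thesis
    by (rule cut_below[OF assms(3)])
next
  case False
  with assms(1) obtain G' where G: "G = add_mset (S, B) G'" and "\<Gamma> = G' + M"
    by (rule union_eq_add_mset_not_mem)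
  then have "derivable_ht k (add_mset (S, B) (add_mset (S, B) G') + M)"
    using assms(2) by simp
  then have "derivable (add_mset (S, B) (add_mset (S, B) G') + Th)"
    using assms(3) copies by (rule_tac cut_below)
  then show ?thesis
    by (simp add: G derivable_Weaken)
qed

lemma cut_analysis_shared_context:
  assumes eq: "G + M = add_mset d \<Gamma>"
    and premise_ht: "\<forall>P\<in>set Ps. \<exists>k<n. derivable_ht k (\<Gamma> + P)"
    and principal: "\<forall>P\<in>set Ps. derivable (G + Th + P) \<Longrightarrow> principal_premises (G + Th) (fst d) (snd d)"
    and apply_rule: "\<And>\<Gamma>'. \<Gamma>' \<subseteq># G + Th \<Longrightarrow> \<forall>P\<in>set Ps. derivable (\<Gamma>' + P) \<Longrightarrow> derivable (add_mset d \<Gamma>')"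
  shows "derivable (G + Th) \<or> principal_premises (G + Th + Th) R A"
proof (cases "d \<in># M")
  case True
  have "derivable (G + Th + P)" if P: "P \<in> set Ps" for P
  proof -
    obtain k where "k < n" "derivable_ht k (\<Gamma> + P)"
      using bspec[OF premise_ht P] by blast
    moreover have "\<Gamma> + P = G + P + (M - {#d#})"
      using union_eq_add_mset_mem[OF eq True] by (simp add: ac_simps)
    moreover have "set_mset (M - {#d#}) \<subseteq> {(R, A)}"
      using copies by (auto dest: in_diffD)
    ultimately have "derivable (G + P + Th)"
      using cut_below[of k "G + P" "M - {#d#}"] by simp
    then show ?thesis
      by (simp add: ac_simps)
  qed
  then have "principal_premises (G + Th) (fst d) (snd d)"
    using principal by blast
  moreover have "d = (R, A)"
    using True copies by auto
  ultimately show ?thesis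
    using principal_outcome by simp
next
  case False
  with eq obtain G' where G: "G = add_mset d G'" and \<Gamma>: "\<Gamma> = G' + M"
    by (rule union_eq_add_mset_not_mem)
  have "derivable (G' + Th + P)" if P: "P \<in> set Ps" for P
  proof -
    obtain k where "k < n" "derivable_ht k (\<Gamma> + P)"
      using bspec[OF premise_ht P] by blast
    then have "derivable (G' + P + Th)"
      using cut_below[of k "G' + P" M] copies \<Gamma> by (simp add: ac_simps)
    then show ?thesis
      by (simp add: ac_simps)
  qed
  then have "derivable (add_mset d (G' + Th))"
    by (rule_tac apply_rule) (auto simp: G)
  then show ?thesis
    by (simp add: G)
qed

lemma cut_analysis_ImpPos:
  assumes "G + M = add_mset (S, Imp f U B C) (\<Gamma>1 + \<Gamma>2)" and "S \<in> U"
    and "derivable_ht k1 (add_mset (f -` S, B) \<Gamma>1)" "derivable_ht k2 (add_mset (S, C) \<Gamma>2)"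
    and "k1 < n" "k2 < n"
  shows "derivable (G + Th) \<or> principal_premises (G + Th + Th) R A"
proof -
  let ?d = "(S, Imp f U B C)"
  have cut_premises: "derivable (add_mset (f -` S, B) (G1 + Th))" "derivable (add_mset (S, C) (G2 + Th))"
    if "\<Gamma>1 = G1 + M1" "\<Gamma>2 = G2 + M2" "set_mset (M1 + M2) \<subseteq> {(R, A)}" for G1 G2 M1 M2
    using cut_below[OF assms(5), of "add_mset (f -` S, B) G1" M1]
      cut_below[OF assms(6), of "add_mset (S, C) G2" M2] assms(3,4) that by auto
  show ?thesis
  proof (cases "?d \<in># M")
    case True
    obtain G1 M1 G2 M2 where \<Gamma>: "\<Gamma>1 = G1 + M1" "\<Gamma>2 = G2 + M2" "G = G1 + G2" "M - {#?d#} = M1 + M2"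
      using union_eq_add_mset_mem[OF assms(1) True] by (rule union_eq_union_cases)
    moreover have "set_mset (M1 + M2) \<subseteq> {(R, A)}"
      using copies \<Gamma>(4) by (metis in_diffD subset_iff)
    ultimately have "derivable (add_mset (f -` S, B) (G1 + Th))" "derivable (add_mset (S, C) (G2 + Th))"
      and "G + Th + Th = (G1 + Th) + (G2 + Th)"
      using cut_premises by (simp_all add: ac_simps)
    then have "principal_premises (G + Th + Th) S (Imp f U B C)"
      unfolding principal_premises.simps if_P[OF assms(2)] by blast
    moreover have "?d = (R, A)"
      using True copies by auto
    ultimately show ?thesis
      by (simp del: principal_premises.simps)
  next
    case False
    with assms(1) obtain G' where G: "G = add_mset ?d G'" and "\<Gamma>1 + \<Gamma>2 = G' + M"
      by (rule union_eq_add_mset_not_mem)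
    from this(2) obtain G1 M1 G2 M2 where "\<Gamma>1 = G1 + M1" "\<Gamma>2 = G2 + M2" "G' = G1 + G2" "M = M1 + M2"
      by (rule union_eq_union_cases)
    with cut_premises copies have "derivable (add_mset ?d (G1 + Th + (G2 + Th)))"
      by (intro derivable_ImpPos[OF assms(2)]) auto
    then have "derivable (G + Th + Th)"
      by (simp add: G \<open>G' = G1 + G2\<close> ac_simps)
    then have "derivable (G + Th)"
      by (rule derivable_contract) simp
    then show ?thesis ..
  qed
qed

lemma cut_analysis_AllPos:
  assumes "G + M = add_mset (S, Forall U B) \<Gamma>" and "S \<in> U"
    and "x \<notin> fv_seq \<Gamma>" "x \<notin> fv_fm B" "derivable_ht k (add_mset (S, open_fm 0 (FVar x) B) \<Gamma>)"
    and "k < n"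
  shows "derivable (G + Th) \<or> principal_premises (G + Th + Th) R A"
proof -
  obtain z where z: "z \<notin> fv_seq (G + Th)" "z \<notin> fv_fm B"
    using obtain_fresh_var[OF infinite_vars] by blast
  have "derivable_ht k (add_mset (S, open_fm 0 (FVar z) B) \<Gamma>)"
    by (rule derivable_ht_instantiate) (use assms infinite_vars in \<open>auto simp: closed_trm_def\<close>)
  moreover have "principal_premises (G + Th) S (Forall U B)"
    if "derivable (G + Th + {#(S, open_fm 0 (FVar z) B)#})"
    using that z assms(2) infinite_vars derivable_instantiate[of S z B "G + Th"] by auto
  moreover have "derivable (add_mset (S, Forall U B) \<Gamma>')"
    if "\<Gamma>' \<subseteq># G + Th" "derivable (\<Gamma>' + {#(S, open_fm 0 (FVar z) B)#})" for \<Gamma>'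
  proof -
    have "fv_seq \<Gamma>' \<subseteq> fv_seq (G + Th)"
      using set_mset_mono[OF that(1)] unfolding fv_seq_def by auto
    with z that(2) assms(2) show ?thesis
      by (auto intro: derivable_AllPos)
  qed
  ultimately show ?thesis
    using assms(6)
    by (rule_tac cut_analysis_shared_context[OF assms(1), where Ps = "[{#(S, open_fm 0 (FVar z) B)#}]"])
      auto
qed

lemma cut_analysis:
  assumes "derivable_ht n (G + M)"
  shows "derivable (G + Th) \<or> principal_premises (G + Th + Th) R A"
  using assms
proof (cases rule: derivable_ht.cases)
  case (Id Rs \<Gamma> p ts)
  then show ?thesis
    by (intro cut_analysis_Id) (simp_all add: partitions_roles_iff)
next
  case (Weaken k S B \<Gamma>)
  then have "derivable (G + Th)"
    by (rule_tac cut_analysis_Weaken[OF Weaken(2,3)]) simp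
  then show ?thesis ..
next
  case (NegR k f S B \<Gamma>)
  then show ?thesis
    by (rule_tac cut_analysis_shared_context[OF NegR(2), where Ps = "[{#(f -` S, B)#}]"])
      (auto simp: derivable_NegR)
next
  case (ConjNegL S U k B \<Gamma> C)
  then show ?thesis
    by (rule_tac cut_analysis_shared_context[OF ConjNegL(2), where Ps = "[{#(S, B)#}]"])
      (auto simp: derivable_ConjNegL)
next
  case (ConjNegR S U k C \<Gamma> B)
  then show ?thesis
    by (rule_tac cut_analysis_shared_context[OF ConjNegR(2), where Ps = "[{#(S, C)#}]"])
      (auto simp: derivable_ConjNegR)
next
  case (ConjPos S U k B \<Gamma> m C)
  moreover have "k < n" "m < n"
    using ConjPos(1) by auto
  ultimately show ?thesis
    by (rule_tac cut_analysis_shared_context[OF ConjPos(2), where Ps = "[{#(S, B)#}, {#(S, C)#}]"])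
      (auto simp: derivable_ConjPos)
next
  case (ImpNeg S U k f B C \<Gamma>)
  then show ?thesis
    by (rule_tac cut_analysis_shared_context[OF ImpNeg(2), where Ps = "[{#(f -` S, B), (S, C)#}]"])
      (auto simp: derivable_ImpNeg)
next
  case (ImpPos S U k f B \<Gamma>1 m C \<Gamma>2)
  then show ?thesis
    by (rule_tac cut_analysis_ImpPos[OF ImpPos(2-5)]) auto
next
  case (AllNeg S U t k B \<Gamma>)
  then show ?thesis
    by (rule_tac cut_analysis_shared_context[OF AllNeg(2), where Ps = "[{#(S, open_fm 0 t B)#}]"])
      (auto simp: derivable_AllNeg)
next
  case (AllPos S U x \<Gamma> B k)
  then show ?thesis
    by (rule_tac cut_analysis_AllPos[OF AllPos(2,3,4,5,6)]) auto
qed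

end

lemma multicut:
  assumes inf: "infinite (UNIV :: 'v set)" and "wf_fm (A :: ('r, 'f, 'v, 'p) fm)"
    and "\<And>B :: ('r, 'f, 'v, 'p) fm. degree B < degree A \<Longrightarrow> wf_fm B \<Longrightarrow> cut_admissible B"
    and "- R1 \<inter> - R2 = {}"
  shows "derivable_ht n1 (G1 + M) \<Longrightarrow> derivable_ht n2 (G2 + N) \<Longrightarrow>
    set_mset M \<subseteq> {(R1, A)} \<Longrightarrow> set_mset N \<subseteq> {(R2, A)} \<Longrightarrow>
    derivable (add_mset (R1 \<inter> R2, A) (G1 + G2))"
proof (induction "n1 + n2" arbitrary: n1 n2 G1 G2 M N rule: less_induct)
  case less
  define Th1 where "Th1 = add_mset (R1 \<inter> R2, A) G2"
  define Th2 where "Th2 = add_mset (R1 \<inter> R2, A) G1"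
  have "derivable (G1 + Th1) \<or> principal_premises (G1 + Th1 + Th1) R1 A"
  proof (rule cut_analysis[OF inf _ less.prems(3,1)])
    show "derivable (G' + Th1)"
      if "k < n1" "derivable_ht k (G' + M')" "set_mset M' \<subseteq> {(R1, A)}" for k G' M'
      using less.hyps[of k n2] that less.prems(2,4) by (simp add: Th1_def)
  qed
  moreover have "derivable (G2 + Th2) \<or> principal_premises (G2 + Th2 + Th2) R2 A"
  proof (rule cut_analysis[OF inf _ less.prems(4,2)])
    show "derivable (G' + Th2)"
      if "k < n2" "derivable_ht k (G' + N')" "set_mset N' \<subseteq> {(R2, A)}" for k G' N'
      using less.hyps[of n1 k G1 M G' N'] that less.prems(1,3) by (simp add: Th2_def add.commute)
  qed
  moreover have "derivable (add_mset (R1 \<inter> R2, A) (G1 + G2))"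
    if "principal_premises (G1 + Th1 + Th1) R1 A" "principal_premises (G2 + Th2 + Th2) R2 A"
  proof -
    have "derivable (add_mset (R1 \<inter> R2, A) (G1 + Th1 + Th1 + (G2 + Th2 + Th2)))"
      using principal_cut[OF inf assms(2-4) that] .
    then have "derivable (add_mset (R1 \<inter> R2, A) (G1 + G2) + (Th1 + Th1 + Th2 + Th2))"
      by (simp add: ac_simps)
    then show ?thesis
      by (rule derivable_contract) (auto simp: Th1_def Th2_def)
  qed
  moreover have "derivable (G1 + Th1) \<Longrightarrow> derivable (add_mset (R1 \<inter> R2, A) (G1 + G2))"
    by (simp add: Th1_def)
  moreover have "derivable (G2 + Th2) \<Longrightarrow> derivable (add_mset (R1 \<inter> R2, A) (G1 + G2))"
    by (simp add: Th2_def add.commute)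
  ultimately show ?case
    by blast
qed

lemma cut_admissible:
  assumes "infinite (UNIV :: 'v set)" and "wf_fm (A :: ('r, 'f, 'v, 'p) fm)"
  shows "cut_admissible A"
  using assms(2)
proof (induction "degree A" arbitrary: A rule: less_induct)
  case less
  show ?case
    unfolding cut_admissible_def
  proof (intro allI impI)
    fix R1 R2 and \<Gamma>1 \<Gamma>2 :: "('r, 'f, 'v, 'p) seq"
    assume disjoint: "- R1 \<inter> - R2 = {}"
      and "derivable (add_mset (R1, A) \<Gamma>1)" "derivable (add_mset (R2, A) \<Gamma>2)"
    then obtain n1 n2 where "derivable_ht n1 (\<Gamma>1 + {#(R1, A)#})"
      and "derivable_ht n2 (\<Gamma>2 + {#(R2, A)#})"
      by (auto simp: derivable_iff_derivable_ht)
    from multicut[OF assms(1) less.prems less.hyps disjoint this]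
    show "derivable (add_mset (R1 \<inter> R2, A) (\<Gamma>1 + \<Gamma>2))"
      by simp
  qed
qed

theorem mainTheorem5:
  fixes R1 R2 :: "'r set"
    and \<Gamma>1 \<Gamma>2 :: "('r, 'f, 'v, 'p) seq"
    and A :: "('r, 'f, 'v, 'p) fm"
  assumes "infinite (UNIV :: 'v set)"
    and "(- R1) \<inter> (- R2) = {}"
    and "wf_seq \<Gamma>1" and "wf_seq \<Gamma>2" and "wf_fm A"
    and "derivable (\<Gamma>1 + {#(R1, A)#})"
    and "derivable (\<Gamma>2 + {#(R2, A)#})"
  shows "derivable (\<Gamma>1 + \<Gamma>2 + {#(R1 \<inter> R2, A)#})"
  using cut_admissibleD[OF cut_admissible[OF assms(1,5)] assms(2)] assms(6,7) by simp

end
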